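(* Let $P(x)=L(Ax)+\frac{\lambda}{2}\|x\|^2$ where $L:\mathbb{R}^n\to\mathbb{R}$ is convex, $A\in\mathbb{R}^{n\times d}$ and $\lambda>0$. Then for every $S\in V$ and every $\beta\in\mathbb{R}^n$ with $L^*(\beta)<\infty$, $$F(S)\ \ge\ D(\beta;S):=-L^*(\beta)-\frac{1}{2\lambda}\|A_S^\top\beta\|^2-\frac{1}{2\lambda}\|A_{S_>}^\top\beta\|_{k-|S|,2}^2 .$$
   Context: Let $d,k$ be positive integers with $k\le d$, and $[d]=\{1,\dots,d\}$ with its usual order. For nonempty $S\subseteq[d]$, $\max S$ is its largest element; set $\max\emptyset=0$. For $x\in\mathbb{R}^d$, $\mathrm{supp}(x)=\{i: x_i\neq0\}$. The state-space tree $G=(V,E)$: $V=\{S\subseteq[d]: |S|\le k \text{ and } k-|S|\le d-\max S\}$, with a directed edge $(S,T)\in E$ for $S,T\in V$ iff $T\neq\emptyset$ and $S=T\setminus\{\max T\}$. For $S\in V$, $\mathrm{desc}(S)$ is the set consisting of $S$ and all its descendants in $G$, $U(S)=\{x\in\mathbb{R}^d: \mathrm{supp}(x)\subseteq S' \text{ for some } S'\in\mathrm{desc}(S)\}$, $F(S)=\inf\{P(x): x\in U(S)\}$, and $S_>=\{i\in[d]: i>\max S\}$. $\|\cdot\|$ is the Euclidean norm. For $S\subseteq[d]$, $A_S$ is the submatrix of $A$ with columns indexed by $S$ (so $A_S^\top\beta\in\mathbb{R}^{|S|}$). For $z\in\mathbb{R}^m$ and integer $j\ge0$, $\|z\|_{j,2}$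 is the Euclidean norm of the vector obtained from $z$ by keeping (up to) $j$ entries of largest absolute value and setting the others to $0$ (so $\|z\|_{0,2}=0$). $L^*(\beta)=\sup_{y\in\mathbb{R}^n}\{\langle\beta,y\rangle-L(y)\}$ is the convex conjugate. *)

theory Defs
  imports "HOL-Analysis.Analysis"
begin

text \<open>Index set [d] = {1..d}; vectors of R^d are functions nat => real
  (only coordinates in {1..d} matter).
  The matrix A in R^(n x d) is given by its columns A j :: real^'n, j in {1..d}.\<close>

definition max0 :: "nat set \<Rightarrow> nat" where
  "max0 S = (if S = {} then 0 else Max S)"

definition supp :: "(nat \<Rightarrow> real) \<Rightarrow> nat set" where
  "supp x = {i. x i \<noteq> 0}"

definition Vset :: "nat \<Rightarrow> nat \<Rightarrow> nat set set" where
  "Vset d k = {S. S \<subseteq> {1..d} \<and> card S \<le> k \<and> k - card S \<le> d - max0 S}"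

definition Edges :: "nat \<Rightarrow> nat \<Rightarrow> (nat set \<times> nat set) set" where
  "Edges d k = {(S, T). S \<in> Vset d k \<and> T \<in> Vset d k \<and> T \<noteq> {} \<and> S = T - {max0 T}}"

definition desc :: "nat \<Rightarrow> nat \<Rightarrow> nat set \<Rightarrow> nat set set" where
  "desc d k S = {T. (S, T) \<in> (Edges d k)\<^sup>*}"

definition Uset :: "nat \<Rightarrow> nat \<Rightarrow> nat set \<Rightarrow> (nat \<Rightarrow> real) set" where
  "Uset d k S = {x. \<exists>S' \<in> desc d k S. supp x \<subseteq> S'}"

definition matvec :: "nat \<Rightarrow> (nat \<Rightarrow> real ^ 'n) \<Rightarrow> (nat \<Rightarrow> real) \<Rightarrow> real ^ 'n" where
  "matvec d A x = (\<Sum>j\<in>{1..d}. x j *\<^sub>R A j)"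

definition Pobj :: "nat \<Rightarrow> (real ^ 'n \<Rightarrow> real) \<Rightarrow> (nat \<Rightarrow> real ^ 'n) \<Rightarrow> real \<Rightarrow> (nat \<Rightarrow> real) \<Rightarrow> real" where
  "Pobj d L A lam x = L (matvec d A x) + lam / 2 * (\<Sum>j\<in>{1..d}. (x j)\<^sup>2)"

definition Fval :: "nat \<Rightarrow> nat \<Rightarrow> (real ^ 'n \<Rightarrow> real) \<Rightarrow> (nat \<Rightarrow> real ^ 'n) \<Rightarrow> real \<Rightarrow> nat set \<Rightarrow> ereal" where
  "Fval d k L A lam S = (INF x\<in>Uset d k S. ereal (Pobj d L A lam x))"

definition Lstar :: "(real ^ 'n \<Rightarrow> real) \<Rightarrow> real ^ 'n \<Rightarrow> ereal" where
  "Lstar L \<beta> = (SUP y. ereal (\<beta> \<bullet> y - L y))"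

definition Sgt :: "nat \<Rightarrow> nat set \<Rightarrow> nat set" where
  "Sgt d S = {i \<in> {1..d}. max0 S < i}"

text \<open>Top-j Euclidean norm of the vector z indexed by the finite set I:
  keep (up to) j entries of largest absolute value, zero the rest.
  The chosen index set J has min j |I| elements and every kept entry dominates
  every discarded one in absolute value (the value does not depend on ties).\<close>
definition topnorm :: "nat \<Rightarrow> nat set \<Rightarrow> (nat \<Rightarrow> real) \<Rightarrow> real" where
  "topnorm j I z = (let J = (SOME J. J \<subseteq> I \<and> card J = min j (card I) \<and>
        (\<forall>i\<in>J. \<forall>i'\<in>I - J. \<bar>z i'\<bar> \<le> \<bar>z i\<bar>))
     in sqrt (\<Sum>i\<in>J. (z i)\<^sup>2))"

definition Dval :: "nat \<Rightarrow> nat \<Rightarrow> (real ^ 'n \<Rightarrow> real) \<Rightarrow> (nat \<Rightarrow> real ^ 'n) \<Rightarrow> real \<Rightarrow> nat set \<Rightarrow> real ^ 'n \<Rightarrow> real" where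
  "Dval d k L A lam S \<beta> =
     - real_of_ereal (Lstar L \<beta>)
     - 1 / (2 * lam) * (\<Sum>j\<in>S. (A j \<bullet> \<beta>)\<^sup>2)
     - 1 / (2 * lam) * (topnorm (k - card S) (Sgt d S) (\<lambda>j. A j \<bullet> \<beta>))\<^sup>2"

end

theory Submission
  imports Defs
begin

text \<open>This is weak duality. By the Fenchel--Young inequality
  \<open>L(Ax) \<ge> \<langle>\<beta>, Ax\<rangle> - L\<^sup>*(\<beta>)\<close>, and completing the square coordinatewise gives
  \<open>x\<^sub>j (A\<^sub>j\<^sup>T\<beta>) + \<lambda>/2 x\<^sub>j\<^sup>2 \<ge> -(A\<^sub>j\<^sup>T\<beta>)\<^sup>2/(2\<lambda>)\<close>; hence a point supported on \<open>S'\<close> has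
  \<open>P(x) \<ge> -L\<^sup>*(\<beta>) - \<Sum>\<^sub>j\<^sub>\<in>\<^sub>S\<^sub>' (A\<^sub>j\<^sup>T\<beta>)\<^sup>2/(2\<lambda>)\<close>. Every descendant \<open>S'\<close> of \<open>S\<close> in the tree
  consists of \<open>S\<close> and at most \<open>k - |S|\<close> indices of \<open>S\<^sub>>\<close>, whose contribution is at most
  the squared top-\<open>(k - |S|)\<close> norm.\<close>

lemma sum_le_sum_of_dominated:
  fixes f :: "'a \<Rightarrow> real"
  assumes "finite A" "finite B" "card A \<le> card B"
    and "\<And>a b. a \<in> A \<Longrightarrow> b \<in> B \<Longrightarrow> f a \<le> f b" and "\<And>b. b \<in> B \<Longrightarrow> 0 \<le> f b"
  shows "sum f A \<le> sum f B"
proof -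
  obtain g where g: "g ` A \<subseteq> B" "inj_on g A"
    using card_le_inj[OF assms(1-3)] by blast
  have "sum f A \<le> sum (f \<circ> g) A"
    using g(1) assms(4) by (intro sum_mono) auto
  also have "\<dots> = sum f (g ` A)"
    using g(2) by (simp add: sum.reindex)
  also have "\<dots> \<le> sum f B"
    using g(1) assms(2,5) by (intro sum_mono2) auto
  finally show ?thesis .
qed

lemma top_set_exists:
  fixes z :: "nat \<Rightarrow> real"
  assumes "finite I"
  shows "\<exists>J. J \<subseteq> I \<and> card J = min j (card I) \<and> (\<forall>i\<in>J. \<forall>i'\<in>I - J. \<bar>z i'\<bar> \<le> \<bar>z i\<bar>)"
proof -
  txt \<open>A set of the right size maximising the squared mass cannot be improved by swapping.\<close>
  define C where "C = {J. J \<subseteq> I \<and> card J = min j (card I)}"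
  define g where "g J = (\<Sum>i\<in>J. (z i)\<^sup>2)" for J
  have "C \<subseteq> Pow I"
    unfolding C_def by blast
  then have "finite C"
    using assms by (simp add: finite_subset)
  moreover obtain T where "T \<subseteq> I" "card T = min j (card I)"
    using obtain_subset_with_card_n[of "min j (card I)" I] by force
  then have "C \<noteq> {}"
    unfolding C_def by blast
  ultimately have "Max (g ` C) \<in> g ` C"
    by (intro Max_in) auto
  then obtain J0 where J0_max: "Max (g ` C) = g J0" and "J0 \<in> C"
    by (rule imageE)
  then have J0: "J0 \<subseteq> I" "card J0 = min j (card I)"
    unfolding C_def by auto
  have maximal: "g J \<le> g J0" if "J \<subseteq> I" "card J = min j (card I)" for J
    unfolding J0_max[symmetric] using that \<open>finite C\<close> by (simp add: C_def)
  have "finite J0"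
    using J0(1) assms by (rule finite_subset)
  show ?thesis
  proof (intro exI[of _ J0] conjI ballI J0)
    fix i i' assume i: "i \<in> J0" and i': "i' \<in> I - J0"
    define J1 where "J1 = insert i' (J0 - {i})"
    have "card J0 > 0"
      using i \<open>finite J0\<close> card_gt_0_iff by blast
    then have "card J1 = card J0"
      unfolding J1_def using i i' \<open>finite J0\<close> by (simp add: card_Diff_singleton)
    moreover have "J1 \<subseteq> I"
      unfolding J1_def using i' J0(1) by blast
    moreover have "g J1 = g J0 - (z i)\<^sup>2 + (z i')\<^sup>2"
      unfolding J1_def g_def using i i' \<open>finite J0\<close> by (simp add: sum_diff1)
    ultimately have "(z i')\<^sup>2 \<le> (z i)\<^sup>2"
      using maximal[of J1] J0(2) by linarith
    then show "\<bar>z i'\<bar> \<le> \<bar>z i\<bar>"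
      by (simp add: abs_le_square_iff)
  qed
qed

lemma sum_squares_le_top_set:
  fixes z :: "nat \<Rightarrow> real"
  assumes "finite I" and "J \<subseteq> I" and "card J = min j (card I)"
    and dominant: "\<forall>i\<in>J. \<forall>i'\<in>I - J. \<bar>z i'\<bar> \<le> \<bar>z i\<bar>"
    and "T \<subseteq> I" and "card T \<le> j"
  shows "(\<Sum>i\<in>T. (z i)\<^sup>2) \<le> (\<Sum>i\<in>J. (z i)\<^sup>2)"
proof -
  have "finite T" "finite J"
    using assms(1,2,5) finite_subset by blast+
  have "card (T - J) \<le> card (J - T)"
  proof (cases "card J = card I")
    case True
    then have "T - J = {}"
      using assms card_subset_eq by blast
    then show ?thesis
      by (simp only: card.empty)
  next
    case False
    then have "card T \<le> card J"
      using assms(3,6) by linarith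
    moreover have "card (T - J) = card T - card (T \<inter> J)" "card (J - T) = card J - card (T \<inter> J)"
      using \<open>finite T\<close> \<open>finite J\<close> by (simp_all add: card_Diff_subset_Int Int_commute)
    ultimately show ?thesis by linarith
  qed
  then have "(\<Sum>i\<in>T - J. (z i)\<^sup>2) \<le> (\<Sum>i\<in>J - T. (z i)\<^sup>2)"
    using \<open>finite T\<close> \<open>finite J\<close> dominant \<open>T \<subseteq> I\<close>
    by (intro sum_le_sum_of_dominated) (auto simp: abs_le_square_iff)
  moreover have "(\<Sum>i\<in>T. (z i)\<^sup>2) = (\<Sum>i\<in>T \<inter> J. (z i)\<^sup>2) + (\<Sum>i\<in>T - J. (z i)\<^sup>2)"
    using \<open>finite T\<close> by (rule sum.Int_Diff)
  moreover have "(\<Sum>i\<in>J. (z i)\<^sup>2) = (\<Sum>i\<in>T \<inter> J. (z i)\<^sup>2) + (\<Sum>i\<in>J - T. (z i)\<^sup>2)"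
    using sum.Int_Diff[OF \<open>finite J\<close>, of _ T] by (simp add: Int_commute)
  ultimately show ?thesis by linarith
qed

lemma sum_squares_le_topnorm:
  fixes z :: "nat \<Rightarrow> real"
  assumes "finite I" and "T \<subseteq> I" and "card T \<le> j"
  shows "(\<Sum>i\<in>T. (z i)\<^sup>2) \<le> (topnorm j I z)\<^sup>2"
proof -
  define J where "J = (SOME J. J \<subseteq> I \<and> card J = min j (card I) \<and>
        (\<forall>i\<in>J. \<forall>i'\<in>I - J. \<bar>z i'\<bar> \<le> \<bar>z i\<bar>))"
  have J: "J \<subseteq> I \<and> card J = min j (card I) \<and> (\<forall>i\<in>J. \<forall>i'\<in>I - J. \<bar>z i'\<bar> \<le> \<bar>z i\<bar>)"
    unfolding J_def by (rule someI_ex[OF top_set_exists[OF assms(1)]])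
  have "(topnorm j I z)\<^sup>2 = (\<Sum>i\<in>J. (z i)\<^sup>2)"
    unfolding topnorm_def Let_def J_def[symmetric] by (simp add: sum_nonneg)
  then show ?thesis
    using sum_squares_le_top_set[OF assms(1) _ _ _ assms(2,3)] J by simp
qed

lemma desc_extends_into_Sgt:
  assumes "T \<in> desc d k S" and "S \<in> Vset d k"
  shows "S \<subseteq> T \<and> T - S \<subseteq> Sgt d S \<and> T \<in> Vset d k"
  using assms(1) unfolding desc_def mem_Collect_eq
proof (induction rule: rtrancl_induct)
  case base
  then show ?case using assms(2) by auto
next
  case (step T T')
  have T'V: "T' \<in> Vset d k" and "T' \<noteq> {}" and T: "T = T' - {Max T'}"
    using step(2) unfolding Edges_def max0_def by auto
  have "finite T'"
    using T'V unfolding Vset_def by (auto intro: finite_subset)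
  then have "Max T' \<in> T'"
    using \<open>T' \<noteq> {}\<close> by simp
  have "S \<subseteq> T'" and "Max T' \<notin> S"
    using step.IH T by auto
  have "max0 S < Max T'"
  proof (cases "S = {}")
    case True
    then show ?thesis
      using \<open>Max T' \<in> T'\<close> T'V unfolding Vset_def max0_def by auto
  next
    case False
    then have "Max S \<in> S"
      using \<open>S \<subseteq> T'\<close> \<open>finite T'\<close> finite_subset by (metis Max_in)
    then have "Max S < Max T'"
      using \<open>S \<subseteq> T'\<close> \<open>finite T'\<close> \<open>Max T' \<notin> S\<close> by (metis Max_ge subsetD order.not_eq_order_implies_strict)
    then show ?thesis
      using False unfolding max0_def by simp
  qed
  then have "Max T' \<in> Sgt d S"
    using \<open>Max T' \<in> T'\<close> T'V unfolding Vset_def Sgt_def by auto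
  then show ?case
    using step.IH \<open>S \<subseteq> T'\<close> T'V T by auto
qed

lemma Lstar_Fenchel_Young:
  assumes "Lstar L \<beta> < \<infinity>"
  shows "\<beta> \<bullet> y - L y \<le> real_of_ereal (Lstar L \<beta>)"
proof -
  have "ereal (\<beta> \<bullet> y' - L y') \<le> Lstar L \<beta>" for y'
    unfolding Lstar_def by (rule SUP_upper) simp
  moreover from this[of y] obtain r where "Lstar L \<beta> = ereal r"
    using assms by (cases "Lstar L \<beta>") auto
  ultimately show ?thesis
    by (metis ereal_less_eq(3) real_of_ereal.simps(1))
qed

lemma neg_square_div_le_linear_plus_quadratic:
  fixes lam t c :: real
  assumes "lam > 0"
  shows "- c\<^sup>2 / (2 * lam) \<le> t * c + lam / 2 * t\<^sup>2"
proof -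
  have "t * c + lam / 2 * t\<^sup>2 + c\<^sup>2 / (2 * lam) = (lam * t + c)\<^sup>2 / (2 * lam)"
    using assms by (simp add: field_simps power2_eq_square)
  also have "\<dots> \<ge> 0"
    using assms by simp
  finally show ?thesis by simp
qed

lemma Pobj_ge_support_dual:
  assumes "lam > 0" and "Lstar L \<beta> < \<infinity>"
    and "S' \<subseteq> {1..d}" and "supp x \<subseteq> S'"
  shows "- real_of_ereal (Lstar L \<beta>) - 1 / (2 * lam) * (\<Sum>j\<in>S'. (A j \<bullet> \<beta>)\<^sup>2)
           \<le> Pobj d L A lam x"
proof -
  let ?c = "\<lambda>j. A j \<bullet> \<beta>"
  have vanish: "x j = 0" if "j \<notin> S'" for j
    using assms(4) that unfolding supp_def by blast
  have "- 1 / (2 * lam) * (\<Sum>j\<in>S'. (?c j)\<^sup>2) = (\<Sum>j\<in>S'. - (?c j)\<^sup>2 / (2 * lam))"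
    by (simp add: sum_distrib_left sum_negf)
  also have "\<dots> \<le> (\<Sum>j\<in>S'. x j * ?c j + lam / 2 * (x j)\<^sup>2)"
    using assms(1) by (intro sum_mono neg_square_div_le_linear_plus_quadratic)
  also have "\<dots> = (\<Sum>j\<in>{1..d}. x j * ?c j + lam / 2 * (x j)\<^sup>2)"
    using assms(3) vanish by (intro sum.mono_neutral_left) auto
  also have "\<dots> = \<beta> \<bullet> matvec d A x + lam / 2 * (\<Sum>j\<in>{1..d}. (x j)\<^sup>2)"
    by (simp add: matvec_def inner_sum_right sum.distrib sum_distrib_left inner_commute)
  finally show ?thesis
    using Lstar_Fenchel_Young[OF assms(2), of "matvec d A x"] unfolding Pobj_def by linarith
qed

theorem mainTheorem4:
  fixes d k :: nat and L :: "real ^ 'n \<Rightarrow> real" and A :: "nat \<Rightarrow> real ^ 'n"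
    and lam :: real and S :: "nat set" and \<beta> :: "real ^ 'n"
  assumes "1 \<le> k" and "k \<le> d"
    and "convex_on UNIV L"
    and "lam > 0"
    and "S \<in> Vset d k"
    and "Lstar L \<beta> < \<infinity>"
  shows "Fval d k L A lam S \<ge> ereal (Dval d k L A lam S \<beta>)"
  unfolding Fval_def
proof (rule INF_greatest)
  fix x assume "x \<in> Uset d k S"
  then obtain S' where "S' \<in> desc d k S" and "supp x \<subseteq> S'"
    unfolding Uset_def by auto
  then have S': "S \<subseteq> S'" "S' - S \<subseteq> Sgt d S" "S' \<subseteq> {1..d}" "card S' \<le> k"
    using desc_extends_into_Sgt[OF _ assms(5)] unfolding Vset_def by auto
  then have "finite S'"
    by (auto intro: finite_subset)
  let ?c = "\<lambda>j. A j \<bullet> \<beta>"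
  have "card (S' - S) \<le> k - card S"
    using S' \<open>finite S'\<close> by (simp add: card_Diff_subset finite_subset)
  then have "(\<Sum>j\<in>S' - S. (?c j)\<^sup>2) \<le> (topnorm (k - card S) (Sgt d S) ?c)\<^sup>2"
    using S' by (intro sum_squares_le_topnorm) (auto simp: Sgt_def)
  moreover have "(\<Sum>j\<in>S'. (?c j)\<^sup>2) = (\<Sum>j\<in>S. (?c j)\<^sup>2) + (\<Sum>j\<in>S' - S. (?c j)\<^sup>2)"
    using S' \<open>finite S'\<close> by (metis add.commute sum.subset_diff)
  ultimately have "Dval d k L A lam S \<beta>
      \<le> - real_of_ereal (Lstar L \<beta>) - 1 / (2 * lam) * (\<Sum>j\<in>S'. (?c j)\<^sup>2)"
    using assms(4) unfolding Dval_def by (simp add: field_simps)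
  also have "\<dots> \<le> Pobj d L A lam x"
    using Pobj_ge_support_dual[OF assms(4,6) S'(3) \<open>supp x \<subseteq> S'\<close>] .
  finally show "ereal (Dval d k L A lam S \<beta>) \<le> ereal (Pobj d L A lam x)"
    by simp
qed

end
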